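(* Let $(X,\mathcal{C})$ be a separable convexity space with Radon number at most $r$, let $E$ be a non-empty finite set, and let $m\ge 2$ be an integer. For any family of functions $f_1,\dots,f_m$ with $f_i:E\to X$ and $\bigcap_{i=1}^m\mathrm{conv}(f_i(E))=\emptyset$, there exist a subset $E_0\subset E$ with $|E_0|\ge\frac{1}{r-1}|E|$, indices $i,j$, and a halfspace $\gamma\in\mathcal{C}$ such that $f_i(E_0)\subset\gamma$ and $f_j(E_0)\subset X\setminus\gamma$.
   Context: A convexity space $(X,\mathcal{C})$ is a non-empty set $X$ with $\mathcal{C}\subset 2^X$ such that: $\emptyset, X\in\mathcal{C}$; $\mathcal{C}$ is closed under intersections of non-empty subfamilies; and $\mathcal{C}$ is closed under unions of non-empty subfamilies totally ordered by inclusion. Members of $\mathcal{C}$ are convex sets; $\mathrm{conv}(Y)$ is the intersection of all convex sets containing $Y$. The Radon number is the smallest $n$ such that every $Y\subset X$ with $|Y|=n$ has a partition $Y=A\cup B$ with $\mathrm{conv}(A)\cap\mathrm{conv}(B)\neq\emptyset$. A halfspace is $\gamma\in\mathcal{C}$ with $X\setminus\gamma\in\mathcal{C}$. The space is separable if for every $S\in\mathcal{C}$ and $x\in X\setminus S$ there is a halfspace $\gamma$ with $S\subset\gamma$ and $x\notin\gamma$. *)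

theory Defs
  imports Complex_Main
begin

definition convexity_space :: "'a set \<Rightarrow> 'a set set \<Rightarrow> bool" where
  "convexity_space X C \<longleftrightarrow>
     X \<noteq> {} \<and> C \<subseteq> Pow X \<and> {} \<in> C \<and> X \<in> C \<and>
     (\<forall>F. F \<noteq> {} \<and> F \<subseteq> C \<longrightarrow> \<Inter>F \<in> C) \<and>
     (\<forall>F. F \<noteq> {} \<and> F \<subseteq> C \<and> (\<forall>A\<in>F. \<forall>B\<in>F. A \<subseteq> B \<or> B \<subseteq> A) \<longrightarrow> \<Union>F \<in> C)"

definition cconv :: "'a set set \<Rightarrow> 'a set \<Rightarrow> 'a set" where
  "cconv C Y = \<Inter>{S \<in> C. Y \<subseteq> S}"

definition radon_property :: "'a set \<Rightarrow> 'a set set \<Rightarrow> nat \<Rightarrow> bool" where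
  "radon_property X C n \<longleftrightarrow>
     (\<forall>Y. Y \<subseteq> X \<and> finite Y \<and> card Y = n \<longrightarrow>
        (\<exists>A B. A \<union> B = Y \<and> A \<inter> B = {} \<and> cconv C A \<inter> cconv C B \<noteq> {}))"

definition radon_number_le :: "'a set \<Rightarrow> 'a set set \<Rightarrow> nat \<Rightarrow> bool" where
  "radon_number_le X C r \<longleftrightarrow> (\<exists>n \<le> r. radon_property X C n)"

definition halfspace :: "'a set \<Rightarrow> 'a set set \<Rightarrow> 'a set \<Rightarrow> bool" where
  "halfspace X C \<gamma> \<longleftrightarrow> \<gamma> \<in> C \<and> X - \<gamma> \<in> C"

definition separable :: "'a set \<Rightarrow> 'a set set \<Rightarrow> bool" where
  "separable X C \<longleftrightarrow>
     (\<forall>S\<in>C. \<forall>x\<in>X - S. \<exists>\<gamma>. halfspace X C \<gamma> \<and> S \<subseteq> \<gamma> \<and> x \<notin> \<gamma>)"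

end

(* Radon's argument turns the Radon number n into Helly's theorem: a finite family of convex
   sets meets as soon as every n - 1 of its members do.  Call a subset of E large if it misses
   fewer than a 1/(n - 1) fraction of E.  Any n - 1 large subsets share an element, so Helly
   gives a point c in the hull of f 1 on every large subset.  Since the hulls of the f i have
   no common point, c avoids the hull of some f i, and separability gives a halfspace
   containing that hull but not c.  The e with f 1 e outside the halfspace form E0: the hull
   of f 1 on the complement of E0 lies in the halfspace, so the complement is not large,
   i.e. card E \<le> (n - 1) card E0 \<le> (r - 1) card E0. *)
theory Submission
  imports Defs
begin

lemma cconv_subset: "S \<in> C \<Longrightarrow> Y \<subseteq> S \<Longrightarrow> cconv C Y \<subseteq> S"
  unfolding cconv_def by blast

lemma subset_cconv: "Y \<subseteq> cconv C Y"
  unfolding cconv_def by blast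

lemma cconv_mono: "Y \<subseteq> Z \<Longrightarrow> cconv C Y \<subseteq> cconv C Z"
  unfolding cconv_def by blast

lemma convexity_spaceD:
  assumes "convexity_space X C"
  shows "X \<noteq> {}" and "{} \<in> C" and "X \<in> C" and "S \<in> C \<Longrightarrow> S \<subseteq> X"
    and "F \<noteq> {} \<Longrightarrow> F \<subseteq> C \<Longrightarrow> \<Inter>F \<in> C"
  using assms unfolding convexity_space_def by blast+

lemma cconv_empty: "convexity_space X C \<Longrightarrow> cconv C {} = {}"
  using convexity_spaceD(2) cconv_subset by blast

lemma cconv_in_convex:
  assumes "convexity_space X C" and "Y \<subseteq> X"
  shows "cconv C Y \<in> C"
proof -
  have "{S \<in> C. Y \<subseteq> S} \<noteq> {}"
    using assms convexity_spaceD(3) by blast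
  then show ?thesis
    unfolding cconv_def by (rule convexity_spaceD(5)[OF assms(1)]) blast
qed

lemma cconv_subset_space:
  "convexity_space X C \<Longrightarrow> Y \<subseteq> X \<Longrightarrow> cconv C Y \<subseteq> X"
  using cconv_in_convex convexity_spaceD(4) by blast

lemma radon_property_ge_2:
  assumes cs: "convexity_space X C" and rp: "radon_property X C n"
  shows "n \<ge> 2"
proof (rule ccontr)
  assume "\<not> n \<ge> 2"
  then have "n = 0 \<or> n = 1" by auto
  moreover obtain x where "x \<in> X"
    using convexity_spaceD(1)[OF cs] by blast
  ultimately obtain Y where Y: "Y \<subseteq> X" "finite Y" "card Y = n" "card Y \<le> 1"
    using that[of "{}"] that[of "{x}"] by (elim disjE) auto
  then obtain A B where AB: "A \<union> B = Y" "A \<inter> B = {}" "cconv C A \<inter> cconv C B \<noteq> {}"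
    using rp unfolding radon_property_def by blast
  have "A = {} \<or> B = {}"
  proof (rule ccontr)
    assume "\<not> (A = {} \<or> B = {})"
    then obtain a b where "a \<in> A" "b \<in> B" by blast
    with AB(1,2) have "{a, b} \<subseteq> Y" "a \<noteq> b" by blast+
    then have "card {a, b} \<le> card Y"
      using Y(2) by (intro card_mono)
    then show False
      using \<open>a \<noteq> b\<close> Y(4) by simp
  qed
  then show False
    using AB(3) cconv_empty[OF cs] by auto
qed

lemma radon_partition_exists:
  assumes "radon_property X C n" and "Y \<subseteq> X" "finite Y" "card Y \<ge> n"
  shows "\<exists>A B. A \<union> B = Y \<and> A \<inter> B = {} \<and> cconv C A \<inter> cconv C B \<noteq> {}"
proof -
  obtain Z where Z: "Z \<subseteq> Y" "card Z = n"
    using obtain_subset_with_card_n[OF assms(4)] by blast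
  moreover have "Z \<subseteq> X" "finite Z"
    using Z(1) assms(2,3) finite_subset by blast+
  ultimately obtain A B where AB: "A \<union> B = Z" "A \<inter> B = {}" "cconv C A \<inter> cconv C B \<noteq> {}"
    using assms(1) unfolding radon_property_def by blast
  have "cconv C B \<subseteq> cconv C (B \<union> (Y - Z))"
    by (rule cconv_mono) blast
  then have "A \<union> (B \<union> (Y - Z)) = Y \<and> A \<inter> (B \<union> (Y - Z)) = {} \<and>
      cconv C A \<inter> cconv C (B \<union> (Y - Z)) \<noteq> {}"
    using AB Z by blast
  then show ?thesis by blast
qed

lemma radon_number_le_Suc:
  assumes "convexity_space X C" and "radon_number_le X C r"
  obtains h where "radon_property X C (Suc h)" and "1 \<le> h" and "Suc h \<le> r"
proof -
  obtain n where "n \<le> r" and rp: "radon_property X C n"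
    using assms(2) unfolding radon_number_le_def by blast
  moreover have "n \<ge> 2"
    using radon_property_ge_2[OF assms(1) rp] .
  ultimately show thesis
    using that[of "n - 1"] by simp
qed

text \<open>Radon's argument: pick a point x S common to all members but S and take a Radon
  partition A, B of these points.  Each S contains all of A or all of B (it can only miss
  x S), hence a common point of the two hulls.\<close>

lemma radon_helly_step:
  assumes cs: "convexity_space X C" and rp: "radon_property X C n"
    and F: "finite F" "F \<subseteq> C" "card F \<ge> n"
    and punctured: "\<And>S. S \<in> F \<Longrightarrow> \<Inter>(F - {S}) \<noteq> {}"
  shows "\<Inter>F \<noteq> {}"
proof -
  have "\<forall>S\<in>F. \<exists>y. y \<in> \<Inter>(F - {S})"
    using punctured by blast
  then obtain x where x: "\<forall>S\<in>F. x S \<in> \<Inter>(F - {S})"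
    by (rule bchoice[elim_format]) blast
  have in_others: "x S \<in> T" if "S \<in> F" "T \<in> F" "T \<noteq> S" for S T
    using x that by blast
  show ?thesis
  proof (cases "inj_on x F")
    case False
    then obtain S T where ST: "S \<in> F" "T \<in> F" "S \<noteq> T" "x S = x T"
      unfolding inj_on_def by blast
    have "x S \<in> U" if "U \<in> F" for U
    proof (cases "U = S")
      case True
      then show ?thesis using ST in_others[of T S] by simp
    next
      case False
      then show ?thesis using ST(1) that in_others by blast
    qed
    then show ?thesis by blast
  next
    case True
    have "card F \<ge> 2"
      using F(3) radon_property_ge_2[OF cs rp] by simp
    have "\<not> F \<subseteq> {S}" for S
    proof
      assume "F \<subseteq> {S}"
      then have "card F \<le> card {S}" by (rule card_mono[rotated]) simp
      with \<open>card F \<ge> 2\<close> show False by simp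
    qed
    have "x S \<in> X" if "S \<in> F" for S
    proof -
      obtain T where "T \<in> F" "T \<noteq> S"
        using \<open>\<not> F \<subseteq> {S}\<close> by blast
      then show ?thesis
        using in_others[OF that] F(2) convexity_spaceD(4)[OF cs] by blast
    qed
    then have "x ` F \<subseteq> X" by blast
    moreover have "finite (x ` F)"
      using F(1) by simp
    moreover have "card (x ` F) \<ge> n"
      using True F(3) by (simp add: card_image)
    ultimately obtain A B where AB: "A \<union> B = x ` F" "A \<inter> B = {}"
      and "cconv C A \<inter> cconv C B \<noteq> {}"
      using radon_partition_exists[OF rp] by meson
    then obtain p where p: "p \<in> cconv C A" "p \<in> cconv C B"
      by blast
    have "p \<in> S" if S: "S \<in> F" for S
    proof -
      have hull_in_S: "p \<in> S" if "p \<in> cconv C D" "D \<subseteq> x ` F" "x S \<notin> D" for D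
      proof -
        have "D \<subseteq> S"
          using that(2,3) in_others[OF _ S] by blast
        then show ?thesis
          using that(1) cconv_subset[of S C D] S F(2) by blast
      qed
      have "A \<subseteq> x ` F" "B \<subseteq> x ` F"
        using AB(1) by blast+
      moreover have "x S \<notin> A \<or> x S \<notin> B"
        using AB(2) by blast
      ultimately show "p \<in> S"
        using hull_in_S p by blast
    qed
    then show ?thesis by blast
  qed
qed

theorem helly_from_radon:
  assumes cs: "convexity_space X C" and rp: "radon_property X C n"
    and "finite F" "F \<subseteq> C" "\<And>G. G \<subseteq> F \<Longrightarrow> card G < n \<Longrightarrow> \<Inter>G \<noteq> {}"
  shows "\<Inter>F \<noteq> {}"
  using assms(3-)
proof (induction "card F" arbitrary: F rule: less_induct)
  case (less F)
  show ?case
  proof (cases "card F < n")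
    case True
    then show ?thesis using less.prems by blast
  next
    case False
    have "\<Inter>(F - {S}) \<noteq> {}" if "S \<in> F" for S
      using less that by (meson Diff_subset card_Diff1_less finite_Diff order_trans)
    then show ?thesis
      using radon_helly_step[OF cs rp] less.prems False by simp
  qed
qed

lemma large_subsets_intersect:
  assumes "finite E" "finite \<A>" "\<A> \<noteq> {}" "card \<A> \<le> h"
    and large: "\<And>A. A \<in> \<A> \<Longrightarrow> h * card (E - A) < card E"
  shows "E \<inter> \<Inter>\<A> \<noteq> {}"
proof -
  have "h * card (\<Union>A\<in>\<A>. E - A) \<le> h * (\<Sum>A\<in>\<A>. card (E - A))"
    using card_UN_le[OF assms(2)] by (rule mult_le_mono2)
  also have "\<dots> = (\<Sum>A\<in>\<A>. h * card (E - A))"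
    by (simp add: sum_distrib_left)
  also have "\<dots> < (\<Sum>A\<in>\<A>. card E)"
    using assms(2,3) large by (intro sum_strict_mono) auto
  also have "\<dots> \<le> h * card E"
    using assms(4) by simp
  finally have "card (\<Union>A\<in>\<A>. E - A) < card E"
    by simp
  then have "\<not> E \<subseteq> (\<Union>A\<in>\<A>. E - A)"
    using assms(1) by (meson card_mono finite_UN_I finite_Diff assms(2) not_le)
  then show ?thesis by blast
qed

definition centerpoint :: "'a set set \<Rightarrow> nat \<Rightarrow> ('e \<Rightarrow> 'a) \<Rightarrow> 'e set \<Rightarrow> 'a \<Rightarrow> bool" where
  "centerpoint C h g E c \<longleftrightarrow> (\<forall>E' \<subseteq> E. h * card (E - E') < card E \<longrightarrow> c \<in> cconv C (g ` E'))"

lemma centerpoint_exists: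
  assumes cs: "convexity_space X C" and rp: "radon_property X C (Suc h)"
    and E: "finite E" and g: "g ` E \<subseteq> X"
  shows "\<exists>c. centerpoint C h g E c"
proof -
  define \<L> where "\<L> = {E'. E' \<subseteq> E \<and> h * card (E - E') < card E}"
  define hull_of where "hull_of E' = cconv C (g ` E')" for E'
  have convex: "hull_of E' \<in> C" if "E' \<subseteq> E" for E'
    unfolding hull_of_def using that g by (intro cconv_in_convex[OF cs]) blast
  have "\<L> \<subseteq> Pow E"
    unfolding \<L>_def by blast
  then have "finite \<L>"
    using E by (simp add: finite_subset)
  then have "finite (hull_of ` \<L>)"
    by (rule finite_imageI)
  moreover have "hull_of ` \<L> \<subseteq> C"
    using convex unfolding \<L>_def by blast
  moreover have "\<Inter>\<G> \<noteq> {}" if \<G>: "\<G> \<subseteq> hull_of ` \<L>" "card \<G> < Suc h" for \<G>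
  proof (cases "\<G> = {}")
    case False
    obtain \<A> where \<A>: "\<A> \<subseteq> \<L>" "inj_on hull_of \<A>" "\<G> = hull_of ` \<A>"
      using subset_image_inj[THEN iffD1, OF \<G>(1)] by blast
    have "finite \<A>"
      using \<A>(1) \<open>finite \<L>\<close> by (rule finite_subset)
    moreover have "\<A> \<noteq> {}"
      using \<A>(3) False by blast
    moreover have "card \<A> \<le> h"
      using \<A>(2,3) \<G>(2) by (simp add: card_image)
    ultimately have "E \<inter> \<Inter>\<A> \<noteq> {}"
      using \<A>(1) unfolding \<L>_def by (intro large_subsets_intersect[OF E]) auto
    then obtain e where e: "e \<in> E" "\<forall>A\<in>\<A>. e \<in> A"
      by blast
    have "g e \<in> hull_of A" if "A \<in> \<A>" for A
      unfolding hull_of_def using e that subset_cconv[of "g ` A" C] by blast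
    then show ?thesis
      using \<A>(3) by blast
  qed simp
  ultimately have "\<Inter>(hull_of ` \<L>) \<noteq> {}"
    by (rule helly_from_radon[OF cs rp])
  then obtain c where c: "\<forall>E'\<in>\<L>. c \<in> hull_of E'"
    by blast
  have "centerpoint C h g E c"
    unfolding centerpoint_def
  proof (intro allI impI)
    fix E' assume "E' \<subseteq> E" "h * card (E - E') < card E"
    then show "c \<in> cconv C (g ` E')"
      using c unfolding \<L>_def hull_of_def by blast
  qed
  then show ?thesis ..
qed

lemma separable_hull:
  assumes "convexity_space X C" and "separable X C" and "Y \<subseteq> X" "c \<in> X" "c \<notin> cconv C Y"
  obtains \<gamma> where "halfspace X C \<gamma>" "Y \<subseteq> \<gamma>" "c \<notin> \<gamma>"
proof -
  have "cconv C Y \<in> C" "c \<in> X - cconv C Y"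
    using cconv_in_convex[OF assms(1,3)] assms(4,5) by blast+
  then obtain \<gamma> where "halfspace X C \<gamma>" "cconv C Y \<subseteq> \<gamma>" "c \<notin> \<gamma>"
    using assms(2) unfolding separable_def by blast
  then show thesis
    using that subset_cconv[of Y C] by blast
qed

lemma centerpoint_depth:
  assumes "centerpoint C h g E c" and "S \<in> C" "c \<notin> S"
  shows "card E \<le> h * card {e \<in> E. g e \<notin> S}"
proof -
  define E1 where "E1 = {e \<in> E. g e \<in> S}"
  have "cconv C (g ` E1) \<subseteq> S"
    by (rule cconv_subset[OF assms(2)]) (auto simp: E1_def)
  then have "c \<notin> cconv C (g ` E1)"
    using assms(3) by blast
  moreover have "E1 \<subseteq> E"
    by (auto simp: E1_def)
  ultimately have "\<not> h * card (E - E1) < card E"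
    using assms(1) unfolding centerpoint_def by meson
  moreover have "E - E1 = {e \<in> E. g e \<notin> S}"
    unfolding E1_def by blast
  ultimately show ?thesis by simp
qed

theorem lemma3p1:
  fixes X :: "'a set" and C :: "'a set set" and r :: nat
    and E :: "'e set" and m :: nat and f :: "nat \<Rightarrow> 'e \<Rightarrow> 'a"
  assumes "convexity_space X C" and "separable X C" and "radon_number_le X C r"
    and "finite E" and "E \<noteq> {}" and "m \<ge> 2"
    and "\<And>i. i \<in> {1..m} \<Longrightarrow> f i ` E \<subseteq> X"
    and "(\<Inter>i\<in>{1..m}. cconv C (f i ` E)) = {}"
  shows "\<exists>E0 \<subseteq> E. real (card E0) \<ge> real (card E) / (real r - 1) \<and>
           (\<exists>i\<in>{1..m}. \<exists>j\<in>{1..m}. \<exists>\<gamma>. halfspace X C \<gamma> \<and>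
              f i ` E0 \<subseteq> \<gamma> \<and> f j ` E0 \<subseteq> X - \<gamma>)"
proof -
  obtain h where rp: "radon_property X C (Suc h)" and h: "1 \<le> h" "Suc h \<le> r"
    using radon_number_le_Suc[OF assms(1,3)] .
  have one: "1 \<in> {1..m}" and f1: "f 1 ` E \<subseteq> X"
    using assms(6,7) by auto
  obtain c where c: "centerpoint C h (f 1) E c"
    using centerpoint_exists[OF assms(1) rp assms(4) f1] by blast
  then have c1: "c \<in> cconv C (f 1 ` E)"
    using assms(4,5) unfolding centerpoint_def by (simp add: card_gt_0_iff)
  then obtain i where i: "i \<in> {1..m}" "c \<notin> cconv C (f i ` E)"
    using assms(8) one by blast
  obtain \<gamma> where \<gamma>: "halfspace X C \<gamma>" "f i ` E \<subseteq> \<gamma>" "c \<notin> \<gamma>"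
    using separable_hull[OF assms(1,2) assms(7)[OF i(1)] _ i(2)] c1
      cconv_subset_space[OF assms(1) f1] by blast
  define E0 where "E0 = {e \<in> E. f 1 e \<notin> \<gamma>}"
  have "card E \<le> h * card E0"
    unfolding E0_def
    by (rule centerpoint_depth[OF c _ \<gamma>(3)]) (use \<gamma>(1) in \<open>simp add: halfspace_def\<close>)
  then have "real (card E) \<le> real h * real (card E0)"
    by (metis of_nat_mono of_nat_mult)
  also have "\<dots> \<le> (real r - 1) * real (card E0)"
    using h by (intro mult_right_mono) auto
  finally have "real (card E) / (real r - 1) \<le> real (card E0)"
    using h by (simp add: pos_divide_le_eq mult.commute)
  moreover have "E0 \<subseteq> E" "f i ` E0 \<subseteq> \<gamma>" "f 1 ` E0 \<subseteq> X - \<gamma>"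
    using \<gamma>(2) f1 unfolding E0_def by blast+
  ultimately show ?thesis
    using i(1) one \<gamma>(1) by blast
qed

end
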